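(* Let $(X,\le)$ be a poset and $E$ an equivalence relation on $X$ with ${\le}\subseteq E$. Then: (i) ${\le}\in\mathsf{Up}(\mathbf E)$; (ii) ${\le}\circ R=R\circ{\le}=R$ for all $R\in\mathsf{Up}(\mathbf E)$; (iii) ${\le}^\smile\circ S=S\circ{\le}^\smile=S$ for all $S\in\mathsf{Down}(\mathbf E)$.
   Context: For binary relations: converse $R^\smile=\{(x,y)\mid(y,x)\in R\}$; composition $R\circ S=\{(x,y)\mid\exists z\,((x,z)\in R,(z,y)\in S)\}$. For a poset $(X,\le)$ and an equivalence relation $E\supseteq{\le}$ on $X$, $E$ is partially ordered by $(u,v)\preceq(x,y)$ iff $x\le u$ and $v\le y$; $\mathbf E=(E,\preceq)$, and $\mathsf{Up}(\mathbf E)$, $\mathsf{Down}(\mathbf E)$ are its sets of up-sets and down-sets. The relation $\le$ is regarded as the set $\{(x,y)\mid x\le y\}\subseteq X^2$. *)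

theory Defs
  imports Main
begin

definition poset_on :: "'a set \<Rightarrow> ('a \<times> 'a) set \<Rightarrow> bool" where
  "poset_on X le \<longleftrightarrow> le \<subseteq> X \<times> X \<and> refl_on X le \<and> antisym le \<and> trans le"

definition E_le :: "('a \<times> 'a) set \<Rightarrow> ('a \<times> 'a) \<Rightarrow> ('a \<times> 'a) \<Rightarrow> bool" where
  "E_le le p q \<longleftrightarrow> (fst q, fst p) \<in> le \<and> (snd p, snd q) \<in> le"

definition Up_E :: "('a \<times> 'a) set \<Rightarrow> ('a \<times> 'a) set \<Rightarrow> ('a \<times> 'a) set set" where
  "Up_E le E = {U. U \<subseteq> E \<and> (\<forall>p\<in>U. \<forall>q\<in>E. E_le le p q \<longrightarrow> q \<in> U)}"

definition Down_E :: "('a \<times> 'a) set \<Rightarrow> ('a \<times> 'a) set \<Rightarrow> ('a \<times> 'a) set set" where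
  "Down_E le E = {D. D \<subseteq> E \<and> (\<forall>p\<in>D. \<forall>q\<in>E. E_le le q p \<longrightarrow> q \<in> D)}"

end

theory Submission
  imports Defs
begin

(* An up-set R of E absorbs le on either side: enlarging the first coordinate downwards
   or the second upwards moves up in the order on E, and stays in E because le \<subseteq> E and
   E is transitive; reflexivity of le gives the reverse inclusions. Down-sets of E for le
   are exactly the up-sets for the converse order, so (iii) is (ii) for the converse. *)

lemma E_le_converse: "E_le (converse le) p q \<longleftrightarrow> E_le le q p"
  by (auto simp: E_le_def)

lemma Down_E_eq_Up_E_converse: "Down_E le E = Up_E (converse le) E"
  unfolding Down_E_def Up_E_def E_le_converse ..

lemma le_in_Up_E:
  assumes "trans le" and "le \<subseteq> E"
  shows "le \<in> Up_E le E"
  using assms unfolding Up_E_def E_le_def trans_def by fastforce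

lemma relcomp_Up_E_left:
  assumes "refl_on X le" and "le \<subseteq> E" and "trans E" and "E \<subseteq> X \<times> X"
    and R: "R \<in> Up_E le E"
  shows "le O R = R"
proof
  have "R \<subseteq> E" and up: "\<And>p q. p \<in> R \<Longrightarrow> q \<in> E \<Longrightarrow> E_le le p q \<Longrightarrow> q \<in> R"
    using R unfolding Up_E_def by auto
  show "le O R \<subseteq> R"
  proof
    fix p assume "p \<in> le O R"
    then obtain x z y where p: "p = (x, y)" and "(x, z) \<in> le" and zy: "(z, y) \<in> R" by blast
    have "(x, y) \<in> E"
      using \<open>(x, z) \<in> le\<close> zy assms(2,3) \<open>R \<subseteq> E\<close> by (meson subsetD transD)
    moreover have "(y, y) \<in> le"
      using zy \<open>R \<subseteq> E\<close> assms(1,4) by (blast intro: refl_onD)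
    ultimately show "p \<in> R"
      using up[OF zy] \<open>(x, z) \<in> le\<close> p by (simp add: E_le_def)
  qed
  show "R \<subseteq> le O R"
    using \<open>R \<subseteq> E\<close> assms(1,4) by (blast intro: refl_onD)
qed

lemma relcomp_Up_E_right:
  assumes "refl_on X le" and "le \<subseteq> E" and "trans E" and "E \<subseteq> X \<times> X"
    and R: "R \<in> Up_E le E"
  shows "R O le = R"
proof
  have "R \<subseteq> E" and up: "\<And>p q. p \<in> R \<Longrightarrow> q \<in> E \<Longrightarrow> E_le le p q \<Longrightarrow> q \<in> R"
    using R unfolding Up_E_def by auto
  show "R O le \<subseteq> R"
  proof
    fix p assume "p \<in> R O le"
    then obtain x z y where p: "p = (x, y)" and xz: "(x, z) \<in> R" and "(z, y) \<in> le" by blast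
    have "(x, y) \<in> E"
      using xz \<open>(z, y) \<in> le\<close> assms(2,3) \<open>R \<subseteq> E\<close> by (meson subsetD transD)
    moreover have "(x, x) \<in> le"
      using xz \<open>R \<subseteq> E\<close> assms(1,4) by (blast intro: refl_onD)
    ultimately show "p \<in> R"
      using up[OF xz] \<open>(z, y) \<in> le\<close> p by (simp add: E_le_def)
  qed
  show "R \<subseteq> R O le"
    using \<open>R \<subseteq> E\<close> assms(1,4) by (blast intro: refl_onD)
qed

theorem lemma3p6:
  fixes X :: "'a set" and le E :: "('a \<times> 'a) set"
  assumes "poset_on X le"
    and "equiv X E"
    and "le \<subseteq> E"
  shows "le \<in> Up_E le E
         \<and> (\<forall>R\<in>Up_E le E. le O R = R \<and> R O le = R)
         \<and> (\<forall>S\<in>Down_E le E. converse le O S = S \<and> S O converse le = S)"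
proof -
  have refl: "refl_on X le" and "trans le"
    using assms(1) unfolding poset_on_def by auto
  have "trans E" and E_sub: "E \<subseteq> X \<times> X"
    using assms(2) equiv_type unfolding equiv_def by auto
  have "converse le \<subseteq> E"
    using assms(2,3) unfolding equiv_def sym_conv_converse_eq by blast
  moreover have "refl_on X (converse le)"
    using refl by simp
  ultimately show ?thesis
    unfolding Down_E_eq_Up_E_converse
    using le_in_Up_E[OF \<open>trans le\<close> assms(3)]
      relcomp_Up_E_left[OF refl assms(3) \<open>trans E\<close> E_sub]
      relcomp_Up_E_right[OF refl assms(3) \<open>trans E\<close> E_sub]
      relcomp_Up_E_left[of X "converse le", OF _ _ \<open>trans E\<close> E_sub]
      relcomp_Up_E_right[of X "converse le", OF _ _ \<open>trans E\<close> E_sub]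
    by simp
qed

end
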